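(* Let $\varphi$ be a real-valued Orlicz integrand. Then $C_\varphi(\mu)$ and $C^\sigma_\varphi(\mu)$ are almost decomposable with respect to $\mu$.
   Context: $(\Omega,\mathcal{A},\mu)$ measure space with nontrivial positive measure, $X$ real Banach space. Orlicz integrand: $\varphi\colon\Omega\times X\to[0,\infty]$ with $\varphi(\omega,\cdot)$ even, convex, lsc, proper, $\varphi(\omega,x)\to0$ as $x\to0$, $\varphi(\omega,x)\to\infty$ as $\|x\|\to\infty$ for a.e. $\omega$, and restriction to $A\times W$ being $\mathcal{A}(A)\otimes\mathcal{B}(W)$-measurable for every set $A$ that is a union of countably many atoms and a $\sigma$-finite set and every separable $W\subset X$; real-valued means $\varphi(\omega,x)<\infty$ for all $x$ and a.e. $\omega$. $L_\varphi(\mu)$: a.e.-classes of strongly measurable $u$ with finite Luxemburg norm $\|u\|_\varphi=\inf\{\alpha>0:\int\varphi(\omega,u/\alpha)d\mu\le1\}$. $C_\varphi(\mu)$: $u\in L_\varphi(\mu)$ with $\|u\chi_{E_n}\|_\varphi\to0$ for every sequence $E_n\in\mathcal{A}$ with $\chi_{E_n}\to0$ a.e.; $C^\sigma_\varphi(\mu)$: its elements vanishing outside a $\sigma$-finite set. A space $S$ of measurable functions $\Omega\to X$ is almost decomposable if for every $u_0\in S$, $F\in\mathcal{A}$ with $\mu(F)<\infty$, $\varepsilon>0$ and bounded strongly measurable $u_1\colon F\to X$ there is measurable $F_\varepsilon\subset F$ with $\mu(F\setminus F_\varepsilon)<\varepsilon$ and $u_0\chi_{\Omega\setminus F_\varepsilon}+u_1\chi_{F_\varepsilon}\in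 S$. *)

theory Defs
  imports "HOL-Analysis.Analysis"
begin

definition is_atom :: "'a measure \<Rightarrow> 'a set \<Rightarrow> bool" where
  "is_atom M A \<longleftrightarrow> A \<in> sets M \<and> emeasure M A > 0 \<and>
     (\<forall>B\<in>sets M. B \<subseteq> A \<longrightarrow> emeasure M B = 0 \<or> emeasure M (A - B) = 0)"

definition sigma_finite_set :: "'a measure \<Rightarrow> 'a set \<Rightarrow> bool" where
  "sigma_finite_set M S \<longleftrightarrow>
     (\<exists>An::nat \<Rightarrow> 'a set. (\<forall>n. An n \<in> sets M \<and> emeasure M (An n) < \<infinity>) \<and> S = (\<Union>n. An n))"

definition atoms_sigma_set :: "'a measure \<Rightarrow> 'a set \<Rightarrow> bool" where
  "atoms_sigma_set M A \<longleftrightarrow>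
     (\<exists>C S. countable C \<and> (\<forall>B\<in>C. is_atom M B) \<and> sigma_finite_set M S \<and> A = \<Union>C \<union> S)"

definition separable_set :: "'b::metric_space set \<Rightarrow> bool" where
  "separable_set W \<longleftrightarrow> (\<exists>D. countable D \<and> D \<subseteq> W \<and> W \<subseteq> closure D)"

definition strongly_measurable :: "'a measure \<Rightarrow> ('a \<Rightarrow> 'b::real_normed_vector) \<Rightarrow> bool" where
  "strongly_measurable M u \<longleftrightarrow>
     (\<exists>s::nat \<Rightarrow> 'a \<Rightarrow> 'b. (\<forall>n. simple_function M (s n)) \<and>
        (\<forall>\<omega>\<in>space M. (\<lambda>n. s n \<omega>) \<longlonglongrightarrow> u \<omega>))"

definition orlicz_integrand :: "'a measure \<Rightarrow> ('a \<Rightarrow> 'b::banach \<Rightarrow> ennreal) \<Rightarrow> bool" where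
  "orlicz_integrand M \<phi> \<longleftrightarrow>
     (AE \<omega> in M.
        (\<forall>x. \<phi> \<omega> (- x) = \<phi> \<omega> x) \<and>
        (\<forall>x y t. 0 \<le> t \<and> t \<le> 1 \<longrightarrow>
            \<phi> \<omega> (t *\<^sub>R x + (1 - t) *\<^sub>R y) \<le> ennreal t * \<phi> \<omega> x + ennreal (1 - t) * \<phi> \<omega> y) \<and>
        (\<forall>c. closed {x. \<phi> \<omega> x \<le> c}) \<and>
        (\<exists>x. \<phi> \<omega> x < \<infinity>) \<and>
        (\<phi> \<omega> \<longlongrightarrow> 0) (at 0) \<and>
        (\<phi> \<omega> \<longlongrightarrow> \<infinity>) at_infinity) \<and>
     (\<forall>A W. atoms_sigma_set M A \<and> separable_set W \<longrightarrow>
        (\<lambda>(\<omega>, x). \<phi> \<omega> x) \<in> borel_measurable (restrict_space M A \<Otimes>\<^sub>M restrict_space borel W))"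

definition real_valued_integrand :: "'a measure \<Rightarrow> ('a \<Rightarrow> 'b \<Rightarrow> ennreal) \<Rightarrow> bool" where
  "real_valued_integrand M \<phi> \<longleftrightarrow> (AE \<omega> in M. \<forall>x. \<phi> \<omega> x < \<infinity>)"

definition lux_set :: "'a measure \<Rightarrow> ('a \<Rightarrow> 'b::real_normed_vector \<Rightarrow> ennreal) \<Rightarrow> ('a \<Rightarrow> 'b) \<Rightarrow> real set" where
  "lux_set M \<phi> u = {\<alpha>. \<alpha> > 0 \<and> (\<integral>\<^sup>+ \<omega>. \<phi> \<omega> ((1 / \<alpha>) *\<^sub>R u \<omega>) \<partial>M) \<le> 1}"

text \<open>Luxemburg norm (meaningful when the set is nonempty).\<close>
definition lux_norm :: "'a measure \<Rightarrow> ('a \<Rightarrow> 'b::real_normed_vector \<Rightarrow> ennreal) \<Rightarrow> ('a \<Rightarrow> 'b) \<Rightarrow> real" where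
  "lux_norm M \<phi> u = Inf (lux_set M \<phi> u)"

definition L_phi :: "'a measure \<Rightarrow> ('a \<Rightarrow> 'b::real_normed_vector \<Rightarrow> ennreal) \<Rightarrow> ('a \<Rightarrow> 'b) set" where
  "L_phi M \<phi> = {u. strongly_measurable M u \<and> lux_set M \<phi> u \<noteq> {}}"

definition C_phi :: "'a measure \<Rightarrow> ('a \<Rightarrow> 'b::real_normed_vector \<Rightarrow> ennreal) \<Rightarrow> ('a \<Rightarrow> 'b) set" where
  "C_phi M \<phi> = {u \<in> L_phi M \<phi>.
     \<forall>E::nat \<Rightarrow> 'a set. (\<forall>n. E n \<in> sets M) \<and>
        (AE \<omega> in M. (\<lambda>n. indicator (E n) \<omega> :: real) \<longlonglongrightarrow> 0) \<longrightarrow>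
        (\<lambda>n. lux_norm M \<phi> (\<lambda>\<omega>. indicator (E n) \<omega> *\<^sub>R u \<omega>)) \<longlonglongrightarrow> 0}"

definition C_sigma_phi :: "'a measure \<Rightarrow> ('a \<Rightarrow> 'b::real_normed_vector \<Rightarrow> ennreal) \<Rightarrow> ('a \<Rightarrow> 'b) set" where
  "C_sigma_phi M \<phi> = {u \<in> C_phi M \<phi>.
     \<exists>S. sigma_finite_set M S \<and> (AE \<omega> in M. \<omega> \<notin> S \<longrightarrow> u \<omega> = 0)}"

definition almost_decomposable :: "'a measure \<Rightarrow> ('a \<Rightarrow> 'b::real_normed_vector) set \<Rightarrow> bool" where
  "almost_decomposable M S \<longleftrightarrow>
     (\<forall>u0\<in>S. \<forall>F\<in>sets M. emeasure M F < \<infinity> \<longrightarrow> (\<forall>\<epsilon>::real. \<epsilon> > 0 \<longrightarrow>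
        (\<forall>u1. strongly_measurable (restrict_space M F) u1 \<and> bounded (u1 ` F) \<longrightarrow>
          (\<exists>F\<epsilon>. F\<epsilon> \<in> sets M \<and> F\<epsilon> \<subseteq> F \<and> emeasure M (F - F\<epsilon>) < ennreal \<epsilon> \<and>
                (\<lambda>\<omega>. if \<omega> \<in> F\<epsilon> then u1 \<omega> else u0 \<omega>) \<in> S))))"

end

theory Submission
  imports Defs
begin

(* Since \<phi> is real-valued, for every k the measurable function \<omega> \<mapsto> \<phi>(\<omega>, k u1(\<omega>)) is finite
   a.e. on F, hence bounded by some N_k outside a set of measure < \<epsilon> 2^-(k+2); intersecting
   over k gives one F_\<epsilon> on which \<phi>(\<omega>, r u1(\<omega>)) is bounded for every r > 0.
   Write w for the patched function (u1 on F_\<epsilon>, u0 elsewhere). By convexity,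
   \<phi>(w/2c) \<le> (\<phi>(u1/c) \<chi>_F_\<epsilon> + \<phi>(u0/c))/2, so 2c is admissible for the Luxemburg norm of
   \<chi>_E w as soon as c is admissible for \<chi>_E u0 and the bound of \<phi>(u1/c) times \<mu>(E \<inter> F_\<epsilon>)
   is at most 1. For E_n with \<chi>_E_n \<rightarrow> 0 a.e. we have \<mu>(E_n \<inter> F) \<rightarrow> 0 because \<mu>(F) < \<infinity>,
   so the order continuity of u0 passes to w. Patching only enlarges the support by F, which
   keeps it \<sigma>-finite. *)

text \<open>Upper bounds for the nonnegative integral without measurability of the integrand: the
  joint measurability of an Orlicz integrand is only assumed over atoms plus a \<sigma>-finite set,
  so \<omega> \<mapsto> \<phi> \<omega> (u \<omega>) need not be measurable for u in the Orlicz space.\<close>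

lemma nn_integral_cmult_le:
  fixes c :: ennreal
  assumes "c \<noteq> \<infinity>"
  shows "(\<integral>\<^sup>+x. c * f x \<partial>M) \<le> c * integral\<^sup>N M f"
proof (cases "c = 0")
  case False
  show ?thesis
    unfolding nn_integral_def[of M "\<lambda>x. c * f x"]
  proof (rule SUP_least, clarify)
    fix g assume g: "simple_function M g" "g \<le> (\<lambda>x. c * f x)"
    define h where "h x = g x / c" for x
    have h: "simple_function M h"
      unfolding h_def using g(1) by (rule simple_function_compose1)
    have "h \<le> f"
      unfolding h_def le_fun_def using g(2) False
      by (intro allI divide_le_posI_ennreal) (auto simp: le_fun_def zero_less_iff_neq_zero)
    have "g = (\<lambda>x. c * h x)"
      unfolding h_def using False assms
      by (simp add: ennreal_times_divide mult.commute[of c] ennreal_mult_divide_eq)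
    then have "integral\<^sup>S M g = c * integral\<^sup>N M h"
      using h by (simp add: nn_integral_eq_simple_integral)
    also have "\<dots> \<le> c * integral\<^sup>N M f"
      using \<open>h \<le> f\<close> by (intro mult_left_mono nn_integral_mono) (auto simp: le_fun_def)
    finally show "integral\<^sup>S M g \<le> c * integral\<^sup>N M f" .
  qed
qed simp

lemma nn_integral_add_le:
  assumes h: "h \<in> borel_measurable M"
  shows "(\<integral>\<^sup>+x. h x + f x \<partial>M) \<le> integral\<^sup>N M h + integral\<^sup>N M f"
  unfolding nn_integral_def[of M "\<lambda>x. h x + f x"]
proof (rule SUP_least, clarify)
  fix g assume g: "simple_function M g" "g \<le> (\<lambda>x. h x + f x)"
  define r where "r x = (if h x = \<infinity> then 0 else g x - h x)" for x
  have g_split: "g x = min (g x) (h x) + r x" for x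
    unfolding r_def
    by (cases "g x = \<infinity>"; cases "g x \<le> h x")
      (auto simp: min_def add_diff_inverse_ennreal diff_eq_0_iff_ennreal less_top)
  have "r \<le> f"
    using g(2) by (auto simp: le_fun_def r_def ennreal_minus_le_iff)
  have "integral\<^sup>S M g = (\<integral>\<^sup>+x. min (g x) (h x) + r x \<partial>M)"
    using g(1) g_split by (simp add: nn_integral_eq_simple_integral flip: g_split)
  also have "\<dots> = (\<integral>\<^sup>+x. min (g x) (h x) \<partial>M) + integral\<^sup>N M r"
    using g(1) h by (intro nn_integral_add) (auto simp: r_def dest: borel_measurable_simple_function)
  also have "\<dots> \<le> integral\<^sup>N M h + integral\<^sup>N M f"
    using \<open>r \<le> f\<close> by (intro add_mono nn_integral_mono) (auto simp: le_fun_def)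
  finally show "integral\<^sup>S M g \<le> integral\<^sup>N M h + integral\<^sup>N M f" .
qed

definition ennreal_convex :: "('b::real_vector \<Rightarrow> ennreal) \<Rightarrow> bool" where
  "ennreal_convex p \<longleftrightarrow>
     (\<forall>x y t. 0 \<le> t \<and> t \<le> 1 \<longrightarrow> p (t *\<^sub>R x + (1 - t) *\<^sub>R y) \<le> ennreal t * p x + ennreal (1 - t) * p y)"

lemma ennreal_convex_scaleR_le:
  assumes "ennreal_convex p" "p 0 = 0" "0 \<le> t" "t \<le> 1"
  shows "p (t *\<^sub>R x) \<le> ennreal t * p x"
  using assms(1)[unfolded ennreal_convex_def, rule_format, of t x 0] assms(2-4) by simp

lemma ennreal_convex_scaleR_mono:
  assumes "ennreal_convex p" "p 0 = 0" "0 \<le> t" "t \<le> 1"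
  shows "p (t *\<^sub>R x) \<le> p x"
proof -
  have "p (t *\<^sub>R x) \<le> ennreal t * p x" using assms by (rule ennreal_convex_scaleR_le)
  also have "\<dots> \<le> 1 * p x" using assms(4) by (intro mult_right_mono) auto
  finally show ?thesis by simp
qed

lemma ennreal_convex_midpoint:
  assumes "ennreal_convex p"
  shows "p ((1/2) *\<^sub>R (x + y)) \<le> ennreal (1/2) * p x + ennreal (1/2) * p y"
  using assms[unfolded ennreal_convex_def, rule_format, of "1/2" x y] by (simp add: scaleR_add_right)

lemma closed_sublevels_tendsto_zero_imp_zero:
  fixes p :: "'b::real_normed_vector \<Rightarrow> ennreal" and v :: 'b
  assumes "v \<noteq> 0" and closed: "\<And>c. closed {x. p x \<le> c}" and lim: "(p \<longlongrightarrow> 0) (at 0)"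
  shows "p 0 = 0"
proof -
  define xs where "xs n = (1 / real (Suc n)) *\<^sub>R v" for n
  have "xs \<longlonglongrightarrow> 0"
    unfolding xs_def using tendsto_scaleR[OF LIMSEQ_Suc[OF lim_inverse_n'] tendsto_const[of v]] by simp
  moreover have "xs n \<noteq> 0" for n using \<open>v \<noteq> 0\<close> by (simp add: xs_def)
  ultimately have "filterlim xs (at 0) sequentially" by (auto simp: filterlim_at)
  then have p_xs: "(\<lambda>n. p (xs n)) \<longlonglongrightarrow> 0" by (rule filterlim_compose[OF lim])
  have p0_le: "p 0 \<le> c" if "c > 0" for c
  proof -
    have "eventually (\<lambda>n. xs n \<in> {x. p x \<le> c}) sequentially"
      using order_tendstoD(2)[OF p_xs that] by (auto elim: eventually_mono)
    from Lim_in_closed_set[OF closed this _ \<open>xs \<longlonglongrightarrow> 0\<close>] show ?thesis by simp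
  qed
  have "p 0 \<le> 0"
    by (rule ennreal_le_epsilon) (simp add: p0_le)
  then show ?thesis by simp
qed

lemma orlicz_integrand_AE_convex_zero:
  fixes \<phi> :: "'a \<Rightarrow> 'b::banach \<Rightarrow> ennreal"
  assumes "orlicz_integrand M \<phi>" and "v \<noteq> (0::'b)"
  shows "AE \<omega> in M. ennreal_convex (\<phi> \<omega>) \<and> \<phi> \<omega> 0 = 0"
  using assms(1) unfolding orlicz_integrand_def ennreal_convex_def
  by (elim conjE eventually_mono) (use closed_sublevels_tendsto_zero_imp_zero[OF assms(2)] in blast)

lemma strongly_measurable_scaleR:
  assumes "strongly_measurable M u"
  shows "strongly_measurable M (\<lambda>\<omega>. r *\<^sub>R u \<omega>)"
proof -
  obtain s where s: "\<And>n. simple_function M (s n)"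
    and s_lim: "\<And>\<omega>. \<omega> \<in> space M \<Longrightarrow> (\<lambda>n. s n \<omega>) \<longlonglongrightarrow> u \<omega>"
    using assms unfolding strongly_measurable_def by blast
  have "simple_function M (\<lambda>\<omega>. r *\<^sub>R s n \<omega>)" for n
    using simple_function_compose1[OF s, of "scaleR r"] by simp
  moreover have "(\<lambda>n. r *\<^sub>R s n \<omega>) \<longlonglongrightarrow> r *\<^sub>R u \<omega>" if "\<omega> \<in> space M" for \<omega>
    using tendsto_scaleR[OF tendsto_const s_lim[OF that]] .
  ultimately show ?thesis
    unfolding strongly_measurable_def by (intro exI[of _ "\<lambda>n \<omega>. r *\<^sub>R s n \<omega>"]) auto
qed

lemma strongly_measurable_borel_measurable:
  assumes "strongly_measurable M u"
  shows "u \<in> borel_measurable M"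
proof -
  obtain s where s: "\<And>n. simple_function M (s n)"
    and s_lim: "\<And>\<omega>. \<omega> \<in> space M \<Longrightarrow> (\<lambda>n. s n \<omega>) \<longlonglongrightarrow> u \<omega>"
    using assms unfolding strongly_measurable_def by blast
  show ?thesis
    using borel_measurable_LIMSEQ_metric[OF borel_measurable_simple_function[OF s] s_lim] .
qed

lemma strongly_measurable_If:
  assumes u1: "strongly_measurable (restrict_space M F) u1" and u0: "strongly_measurable M u0"
    and F: "F \<in> sets M" and G: "G \<in> sets M" "G \<subseteq> F"
  shows "strongly_measurable M (\<lambda>\<omega>. if \<omega> \<in> G then u1 \<omega> else u0 \<omega>)"
proof -
  obtain s where s: "\<And>n. simple_function (restrict_space M F) (s n)"
    and s_lim: "\<And>\<omega>. \<omega> \<in> space (restrict_space M F) \<Longrightarrow> (\<lambda>n. s n \<omega>) \<longlonglongrightarrow> u1 \<omega>"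
    using u1 unfolding strongly_measurable_def by blast
  obtain t where t: "\<And>n. simple_function M (t n)"
    and t_lim: "\<And>\<omega>. \<omega> \<in> space M \<Longrightarrow> (\<lambda>n. t n \<omega>) \<longlonglongrightarrow> u0 \<omega>"
    using u0 unfolding strongly_measurable_def by blast
  have "F \<inter> space M \<in> sets M" using F by simp
  then have s': "simple_function M (\<lambda>\<omega>. indicator F \<omega> *\<^sub>R s n \<omega>)" for n
    using s[of n] by (simp add: simple_function_restrict_space)
  have "G \<inter> space M \<in> sets M" using G(1) by simp
  then have "simple_function M (\<lambda>\<omega>. if \<omega> \<in> G then indicator F \<omega> *\<^sub>R s n \<omega> else t n \<omega>)" for n
    by (rule simple_function_If_set[OF s' t])
  moreover have "(\<lambda>\<omega>. if \<omega> \<in> G then indicator F \<omega> *\<^sub>R s n \<omega> else t n \<omega>) =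
      (\<lambda>\<omega>. if \<omega> \<in> G then s n \<omega> else t n \<omega>)" for n
    using G(2) by (intro ext) (simp add: subset_iff)
  moreover have "(\<lambda>n. if \<omega> \<in> G then s n \<omega> else t n \<omega>) \<longlonglongrightarrow> (if \<omega> \<in> G then u1 \<omega> else u0 \<omega>)"
    if "\<omega> \<in> space M" for \<omega>
  proof (cases "\<omega> \<in> G")
    case True
    with G(2) that have "\<omega> \<in> space (restrict_space M F)" by (auto simp: space_restrict_space)
    with True show ?thesis using s_lim by simp
  qed (use t_lim[OF that] in simp)
  ultimately show ?thesis
    unfolding strongly_measurable_def by (intro exI[of _ "\<lambda>n \<omega>. if \<omega> \<in> G then s n \<omega> else t n \<omega>"]) simp
qed

lemma orlicz_integrand_measurable_comp:
  fixes \<phi> :: "'a \<Rightarrow> 'b::banach \<Rightarrow> ennreal"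
  assumes orl: "orlicz_integrand M \<phi>" and F: "F \<in> sets M" "emeasure M F < \<infinity>"
    and v: "strongly_measurable (restrict_space M F) v"
  shows "(\<lambda>\<omega>. \<phi> \<omega> (v \<omega>)) \<in> borel_measurable (restrict_space M F)"
proof -
  let ?R = "restrict_space M F"
  obtain s where s: "\<And>n. simple_function ?R (s n)"
    and s_lim: "\<And>\<omega>. \<omega> \<in> space ?R \<Longrightarrow> (\<lambda>n. s n \<omega>) \<longlonglongrightarrow> v \<omega>"
    using v unfolding strongly_measurable_def by blast
  define W where "W = closure (\<Union>n. s n ` space ?R)"
  have "countable (\<Union>n. s n ` space ?R)"
    using s by (simp add: simple_function_def countable_finite)
  then have "separable_set W"
    unfolding separable_set_def W_def by (intro exI[of _ "\<Union>n. s n ` space ?R"]) (simp add: closure_subset)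
  moreover have "atoms_sigma_set M F"
    unfolding atoms_sigma_set_def sigma_finite_set_def
    using F by (intro exI[of _ "{}"] exI[of _ F]) auto
  ultimately have joint: "(\<lambda>(\<omega>, x). \<phi> \<omega> x) \<in> borel_measurable (?R \<Otimes>\<^sub>M restrict_space borel W)"
    using orl unfolding orlicz_integrand_def by blast
  have "v \<omega> \<in> W" if "\<omega> \<in> space ?R" for \<omega>
    unfolding W_def closure_sequential using s_lim[OF that] that
    by (intro exI[of _ "\<lambda>n. s n \<omega>"]) auto
  then have "v \<in> measurable ?R (restrict_space borel W)"
    using strongly_measurable_borel_measurable[OF v] by (intro measurable_restrict_space2) (auto simp: Pi_iff)
  then have "(\<lambda>\<omega>. (\<omega>, v \<omega>)) \<in> measurable ?R (?R \<Otimes>\<^sub>M restrict_space borel W)"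
    by (intro measurable_Pair measurable_ident_sets) simp_all
  from measurable_comp[OF this joint] show ?thesis by (simp add: comp_def)
qed

lemma emeasure_above_level_less:
  fixes g :: "'a \<Rightarrow> ennreal"
  assumes F: "F \<in> sets M" "emeasure M F < \<infinity>"
    and g: "g \<in> borel_measurable (restrict_space M F)"
    and finite: "AE \<omega> in M. \<omega> \<in> F \<longrightarrow> g \<omega> < \<infinity>" and "0 < \<delta>"
  shows "\<exists>N::nat. emeasure M {\<omega>\<in>F. of_nat N < g \<omega>} < \<delta>"
proof -
  define A where "A N = {\<omega>\<in>F. of_nat N < g \<omega>}" for N :: nat
  have F_space: "F \<inter> space M = F" using F(1) by (rule sets.Int_space_eq2)
  have A_sets: "A N \<in> sets M" for N
  proof -
    have "{\<omega> \<in> space (restrict_space M F). of_nat N < g \<omega>} \<in> sets (restrict_space M F)"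
      using g by measurable
    then show ?thesis
      using F(1) by (simp add: A_def space_restrict_space F_space sets_restrict_space_iff)
  qed
  have "decseq A"
    unfolding decseq_def A_def by (auto intro: le_less_trans[OF of_nat_mono])
  moreover have "emeasure M (A N) \<noteq> \<infinity>" for N
    using emeasure_mono[of "A N" F M] F by (auto simp: A_def top_unique)
  ultimately have "(\<lambda>N. emeasure M (A N)) \<longlonglongrightarrow> emeasure M (\<Inter>N. A N)"
    using A_sets by (intro Lim_emeasure_decseq) auto
  moreover have "emeasure M (\<Inter>N. A N) = 0"
  proof -
    have "(\<Inter>N. A N) = {\<omega>\<in>space M. \<omega> \<in> F \<and> g \<omega> = \<infinity>}"
      using sets.sets_into_space[OF F(1)]
      by (auto simp: A_def of_nat_less_top) (metis ennreal_Ex_less_of_nat less_asym less_top)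
    also have "emeasure M \<dots> = 0"
      using finite by (intro emeasure_eq_0_AE) (auto elim: eventually_mono)
    finally show ?thesis .
  qed
  ultimately have "eventually (\<lambda>N. emeasure M (A N) < \<delta>) sequentially"
    using \<open>0 < \<delta>\<close> by (auto intro: order_tendstoD)
  then show ?thesis unfolding A_def by (auto dest: eventually_happens)
qed

lemma bounded_on_large_subset:
  fixes g :: "nat \<Rightarrow> 'a \<Rightarrow> ennreal"
  assumes F: "F \<in> sets M" "emeasure M F < \<infinity>" and "0 < \<epsilon>"
    and g: "\<And>k. g k \<in> borel_measurable (restrict_space M F)"
    and finite: "AE \<omega> in M. \<omega> \<in> F \<longrightarrow> (\<forall>k. g k \<omega> < \<infinity>)"
  obtains G N where "G \<in> sets M" "G \<subseteq> F" "emeasure M (F - G) < ennreal \<epsilon>"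
    "\<And>k \<omega>. \<omega> \<in> G \<Longrightarrow> g k \<omega> \<le> of_nat (N k :: nat)"
proof -
  define \<delta> where "\<delta> k = \<epsilon> / 2 * (1/2) ^ Suc k" for k :: nat
  have "\<exists>N::nat. emeasure M {\<omega>\<in>F. of_nat N < g k \<omega>} < ennreal (\<delta> k)" for k
    using \<open>0 < \<epsilon>\<close> finite
    by (intro emeasure_above_level_less[OF F g]) (auto simp: \<delta>_def elim: eventually_mono)
  then obtain N where N: "\<And>k. emeasure M {\<omega>\<in>F. of_nat (N k) < g k \<omega>} < ennreal (\<delta> k)"
    by metis
  define G where "G = F - (\<Union>k. {\<omega>\<in>F. of_nat (N k) < g k \<omega>})"
  have level_sets: "{\<omega>\<in>F. of_nat (N k) < g k \<omega>} \<in> sets M" for k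
  proof -
    have "{\<omega> \<in> space (restrict_space M F). of_nat (N k) < g k \<omega>} \<in> sets (restrict_space M F)"
      using g[of k] by measurable
    then show ?thesis
      using F(1) by (simp add: space_restrict_space sets.Int_space_eq2 sets_restrict_space_iff)
  qed
  have "emeasure M (F - G) \<le> (\<Sum>k. emeasure M {\<omega>\<in>F. of_nat (N k) < g k \<omega>})"
    unfolding G_def using level_sets F(1)
    by (subst Diff_Diff_Int) (auto intro!: order_trans[OF emeasure_mono emeasure_subadditive_countably])
  also have "\<dots> \<le> (\<Sum>k. ennreal (\<delta> k))"
    using N by (intro suminf_le) (auto intro: less_imp_le)
  also have "\<dots> = ennreal (\<epsilon> / 2 * 1)"
    using \<open>0 < \<epsilon>\<close> unfolding \<delta>_def by (intro suminf_ennreal_eq sums_mult power_half_series) auto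
  also have "\<dots> < ennreal \<epsilon>"
    using \<open>0 < \<epsilon>\<close> by (simp add: ennreal_lessI)
  finally have "emeasure M (F - G) < ennreal \<epsilon>" .
  moreover have "G \<in> sets M" using F(1) level_sets by (auto simp: G_def)
  moreover have "g k \<omega> \<le> of_nat (N k)" if "\<omega> \<in> G" for k \<omega>
    using that by (auto simp: G_def not_less)
  moreover have "G \<subseteq> F" by (auto simp: G_def)
  ultimately show ?thesis using that by blast
qed

lemma emeasure_Int_tendsto_zero:
  assumes F: "F \<in> sets M" "emeasure M F < \<infinity>" and E: "\<And>n. E n \<in> sets M"
    and lim: "AE \<omega> in M. (\<lambda>n. indicator (E n) \<omega> :: real) \<longlonglongrightarrow> 0"
  shows "(\<lambda>n. emeasure M (E n \<inter> F)) \<longlonglongrightarrow> 0"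
proof -
  have "(\<lambda>n. \<integral>\<^sup>+\<omega>. indicator (E n \<inter> F) \<omega> \<partial>M) \<longlonglongrightarrow> (\<integral>\<^sup>+\<omega>. 0 \<partial>M)"
  proof (rule nn_integral_dominated_convergence[where w="indicator F"])
    show "AE \<omega> in M. (\<lambda>n. indicator (E n \<inter> F) \<omega> :: ennreal) \<longlonglongrightarrow> 0"
      using lim
    proof eventually_elim
      case (elim \<omega>)
      then have "eventually (\<lambda>n. (indicator (E n) \<omega> :: real) < 1) sequentially"
        by (rule order_tendstoD) simp
      then have "eventually (\<lambda>n. (indicator (E n \<inter> F) \<omega> :: ennreal) = 0) sequentially"
        by (rule eventually_mono) (simp add: indicator_def)
      then show ?case by (rule tendsto_eventually)
    qed
    show "(\<integral>\<^sup>+\<omega>. indicator F \<omega> \<partial>M) < \<infinity>" using F by simp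
  qed (use F E in \<open>auto split: split_indicator\<close>)
  then show ?thesis using E F(1) by simp
qed

lemma lux_set_mono:
  assumes convex: "AE \<omega> in M. ennreal_convex (\<phi> \<omega>) \<and> \<phi> \<omega> 0 = 0"
    and "\<alpha> \<in> lux_set M \<phi> u" "\<alpha> \<le> \<beta>"
  shows "\<beta> \<in> lux_set M \<phi> u"
proof -
  have "0 < \<alpha>" and \<alpha>: "(\<integral>\<^sup>+\<omega>. \<phi> \<omega> ((1 / \<alpha>) *\<^sub>R u \<omega>) \<partial>M) \<le> 1"
    using assms(2) by (auto simp: lux_set_def)
  have "AE \<omega> in M. \<phi> \<omega> ((1 / \<beta>) *\<^sub>R u \<omega>) \<le> \<phi> \<omega> ((1 / \<alpha>) *\<^sub>R u \<omega>)"
    using convex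
  proof eventually_elim
    case (elim \<omega>)
    then have "\<phi> \<omega> ((\<alpha> / \<beta>) *\<^sub>R ((1 / \<alpha>) *\<^sub>R u \<omega>)) \<le> \<phi> \<omega> ((1 / \<alpha>) *\<^sub>R u \<omega>)"
      using \<open>0 < \<alpha>\<close> \<open>\<alpha> \<le> \<beta>\<close> by (intro ennreal_convex_scaleR_mono) auto
    then show ?case using \<open>0 < \<alpha>\<close> by simp
  qed
  from order_trans[OF nn_integral_mono_AE[OF this] \<alpha>]
  have "(\<integral>\<^sup>+\<omega>. \<phi> \<omega> ((1 / \<beta>) *\<^sub>R u \<omega>) \<partial>M) \<le> 1" .
  then show ?thesis using \<open>0 < \<alpha>\<close> \<open>\<alpha> \<le> \<beta>\<close> by (simp add: lux_set_def)
qed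

lemma lux_set_indicator:
  assumes "AE \<omega> in M. \<phi> \<omega> 0 = 0" and "\<alpha> \<in> lux_set M \<phi> u"
  shows "\<alpha> \<in> lux_set M \<phi> (\<lambda>\<omega>. indicator E \<omega> *\<^sub>R u \<omega>)"
proof -
  have "AE \<omega> in M. \<phi> \<omega> ((1 / \<alpha>) *\<^sub>R (indicator E \<omega> *\<^sub>R u \<omega>)) \<le> \<phi> \<omega> ((1 / \<alpha>) *\<^sub>R u \<omega>)"
    using assms(1) by eventually_elim (simp add: indicator_def)
  from order_trans[OF nn_integral_mono_AE[OF this]] show ?thesis
    using assms(2) by (simp add: lux_set_def)
qed

lemma lux_norm_le: "\<alpha> \<in> lux_set M \<phi> u \<Longrightarrow> lux_norm M \<phi> u \<le> \<alpha>"
  unfolding lux_norm_def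
  by (rule cInf_lower) (auto simp: lux_set_def bdd_below_def intro!: exI[of _ 0])

lemma lux_norm_nonneg: "lux_set M \<phi> u \<noteq> {} \<Longrightarrow> 0 \<le> lux_norm M \<phi> u"
  unfolding lux_norm_def by (rule cInf_greatest) (auto simp: lux_set_def)

lemma lux_set_if_lux_norm_less:
  assumes "AE \<omega> in M. ennreal_convex (\<phi> \<omega>) \<and> \<phi> \<omega> 0 = 0"
    and "lux_set M \<phi> u \<noteq> {}" "lux_norm M \<phi> u < \<delta>"
  shows "\<delta> \<in> lux_set M \<phi> u"
proof -
  obtain \<alpha> where "\<alpha> \<in> lux_set M \<phi> u" "\<alpha> < \<delta>"
    using cInf_lessD[OF assms(2) assms(3)[unfolded lux_norm_def]] by blast
  then show ?thesis using lux_set_mono[OF assms(1)] by auto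
qed

lemma tendsto_lux_norm_zero_iff:
  assumes convex: "AE \<omega> in M. ennreal_convex (\<phi> \<omega>) \<and> \<phi> \<omega> 0 = 0"
    and nonempty: "\<And>n. lux_set M \<phi> (f n) \<noteq> {}"
  shows "(\<lambda>n. lux_norm M \<phi> (f n)) \<longlonglongrightarrow> 0 \<longleftrightarrow>
    (\<forall>c>0. eventually (\<lambda>n. c \<in> lux_set M \<phi> (f n)) sequentially)"
proof
  assume "(\<lambda>n. lux_norm M \<phi> (f n)) \<longlonglongrightarrow> 0"
  then show "\<forall>c>0. eventually (\<lambda>n. c \<in> lux_set M \<phi> (f n)) sequentially"
    by (auto elim!: eventually_mono[OF order_tendstoD(2)]
        intro: lux_set_if_lux_norm_less[OF convex nonempty])
next
  assume small: "\<forall>c>0. eventually (\<lambda>n. c \<in> lux_set M \<phi> (f n)) sequentially"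
  show "(\<lambda>n. lux_norm M \<phi> (f n)) \<longlonglongrightarrow> 0"
  proof (rule order_tendstoI)
    fix a :: real assume "a < 0"
    then show "eventually (\<lambda>n. a < lux_norm M \<phi> (f n)) sequentially"
      using lux_norm_nonneg[OF nonempty] by (intro always_eventually allI) (meson less_le_trans)
  next
    fix a :: real assume "0 < a"
    then have "eventually (\<lambda>n. a / 2 \<in> lux_set M \<phi> (f n)) sequentially"
      using small by simp
    then show "eventually (\<lambda>n. lux_norm M \<phi> (f n) < a) sequentially"
      using \<open>0 < a\<close> by (elim eventually_mono) (auto dest: lux_norm_le)
  qed
qed

lemma lux_set_add:
  assumes convex: "AE \<omega> in M. ennreal_convex (\<phi> \<omega>)"
    and h: "h \<in> borel_measurable M" "AE \<omega> in M. \<phi> \<omega> ((1/c) *\<^sub>R a \<omega>) \<le> h \<omega>" "integral\<^sup>N M h \<le> 1"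
    and b: "c \<in> lux_set M \<phi> b"
  shows "2 * c \<in> lux_set M \<phi> (\<lambda>\<omega>. a \<omega> + b \<omega>)"
proof -
  let ?h = "ennreal (1/2)"
  have "0 < c" and b_int: "(\<integral>\<^sup>+\<omega>. \<phi> \<omega> ((1/c) *\<^sub>R b \<omega>) \<partial>M) \<le> 1"
    using b by (auto simp: lux_set_def)
  have "AE \<omega> in M. \<phi> \<omega> ((1 / (2*c)) *\<^sub>R (a \<omega> + b \<omega>)) \<le> ?h * h \<omega> + ?h * \<phi> \<omega> ((1/c) *\<^sub>R b \<omega>)"
    using convex h(2)
  proof eventually_elim
    case (elim \<omega>)
    have "(1 / (2*c)) *\<^sub>R (a \<omega> + b \<omega>) = (1/2) *\<^sub>R ((1/c) *\<^sub>R a \<omega> + (1/c) *\<^sub>R b \<omega>)"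
      by (simp add: scaleR_add_right)
    then have "\<phi> \<omega> ((1 / (2*c)) *\<^sub>R (a \<omega> + b \<omega>)) \<le> ?h * \<phi> \<omega> ((1/c) *\<^sub>R a \<omega>) + ?h * \<phi> \<omega> ((1/c) *\<^sub>R b \<omega>)"
      using ennreal_convex_midpoint[OF elim(1)] by simp
    also have "\<dots> \<le> ?h * h \<omega> + ?h * \<phi> \<omega> ((1/c) *\<^sub>R b \<omega>)"
      using elim(2) by (intro add_mono mult_left_mono) auto
    finally show ?case .
  qed
  then have "(\<integral>\<^sup>+\<omega>. \<phi> \<omega> ((1 / (2*c)) *\<^sub>R (a \<omega> + b \<omega>)) \<partial>M) \<le>
      (\<integral>\<^sup>+\<omega>. ?h * h \<omega> + ?h * \<phi> \<omega> ((1/c) *\<^sub>R b \<omega>) \<partial>M)"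
    by (rule nn_integral_mono_AE)
  also have "\<dots> \<le> (\<integral>\<^sup>+\<omega>. ?h * h \<omega> \<partial>M) + (\<integral>\<^sup>+\<omega>. ?h * \<phi> \<omega> ((1/c) *\<^sub>R b \<omega>) \<partial>M)"
    using h(1) by (intro nn_integral_add_le) simp
  also have "(\<integral>\<^sup>+\<omega>. ?h * h \<omega> \<partial>M) = ?h * integral\<^sup>N M h"
    using h(1) by (rule nn_integral_cmult)
  also have "(\<integral>\<^sup>+\<omega>. ?h * \<phi> \<omega> ((1/c) *\<^sub>R b \<omega>) \<partial>M) \<le> ?h * (\<integral>\<^sup>+\<omega>. \<phi> \<omega> ((1/c) *\<^sub>R b \<omega>) \<partial>M)"
    by (rule nn_integral_cmult_le) simp
  also have "?h * integral\<^sup>N M h + ?h * (\<integral>\<^sup>+\<omega>. \<phi> \<omega> ((1/c) *\<^sub>R b \<omega>) \<partial>M) \<le> ?h * 1 + ?h * 1"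
    using h(3) b_int by (intro add_mono mult_left_mono) simp_all
  also have "?h * 1 + ?h * 1 = 1"
    by (simp add: ennreal_plus[symmetric] del: ennreal_half ennreal_plus)
  finally show ?thesis using \<open>0 < c\<close> by (simp add: lux_set_def)
qed

lemma C_phi_iff_eventually_lux_set:
  assumes convex: "AE \<omega> in M. ennreal_convex (\<phi> \<omega>) \<and> \<phi> \<omega> 0 = 0"
  shows "u \<in> C_phi M \<phi> \<longleftrightarrow> u \<in> L_phi M \<phi> \<and>
    (\<forall>E. (\<forall>n. E n \<in> sets M) \<and> (AE \<omega> in M. (\<lambda>n. indicator (E n) \<omega> :: real) \<longlonglongrightarrow> 0) \<longrightarrow>
      (\<forall>c>0. eventually (\<lambda>n. c \<in> lux_set M \<phi> (\<lambda>\<omega>. indicator (E n) \<omega> *\<^sub>R u \<omega>)) sequentially))"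
proof (cases "u \<in> L_phi M \<phi>")
  case True
  then obtain \<alpha> where "\<alpha> \<in> lux_set M \<phi> u" unfolding L_phi_def by blast
  moreover have "AE \<omega> in M. \<phi> \<omega> 0 = 0" using convex by (auto elim: eventually_mono)
  ultimately have "lux_set M \<phi> (\<lambda>\<omega>. indicator (E n) \<omega> *\<^sub>R u \<omega>) \<noteq> {}" for E n
    using lux_set_indicator by blast
  then have "(\<lambda>n. lux_norm M \<phi> (\<lambda>\<omega>. indicator (E n) \<omega> *\<^sub>R u \<omega>)) \<longlonglongrightarrow> 0 \<longleftrightarrow>
      (\<forall>c>0. eventually (\<lambda>n. c \<in> lux_set M \<phi> (\<lambda>\<omega>. indicator (E n) \<omega> *\<^sub>R u \<omega>)) sequentially)" for E
    by (rule tendsto_lux_norm_zero_iff[OF convex])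
  with True show ?thesis unfolding C_phi_def by simp
qed (simp add: C_phi_def)

lemma lux_set_patch:
  assumes convex: "AE \<omega> in M. ennreal_convex (\<phi> \<omega>) \<and> \<phi> \<omega> 0 = 0"
    and EG: "E \<inter> G \<in> sets M"
    and u0: "c \<in> lux_set M \<phi> (\<lambda>\<omega>. indicator E \<omega> *\<^sub>R u0 \<omega>)"
    and bound: "AE \<omega> in M. \<omega> \<in> E \<inter> G \<longrightarrow> \<phi> \<omega> ((1/c) *\<^sub>R u1 \<omega>) \<le> B"
    and small: "B * emeasure M (E \<inter> G) \<le> 1"
  shows "2 * c \<in> lux_set M \<phi> (\<lambda>\<omega>. indicator E \<omega> *\<^sub>R (if \<omega> \<in> G then u1 \<omega> else u0 \<omega>))"
proof -
  have "(\<lambda>\<omega>. indicator E \<omega> *\<^sub>R (if \<omega> \<in> G then u1 \<omega> else u0 \<omega>)) =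
      (\<lambda>\<omega>. indicator (E \<inter> G) \<omega> *\<^sub>R u1 \<omega> + indicator (- G) \<omega> *\<^sub>R (indicator E \<omega> *\<^sub>R u0 \<omega>))"
    by (auto simp: indicator_def)
  moreover have "2 * c \<in> lux_set M \<phi>
      (\<lambda>\<omega>. indicator (E \<inter> G) \<omega> *\<^sub>R u1 \<omega> + indicator (- G) \<omega> *\<^sub>R (indicator E \<omega> *\<^sub>R u0 \<omega>))"
  proof (rule lux_set_add[where h="\<lambda>\<omega>. B * indicator (E \<inter> G) \<omega>"])
    show "AE \<omega> in M. \<phi> \<omega> ((1/c) *\<^sub>R (indicator (E \<inter> G) \<omega> *\<^sub>R u1 \<omega>)) \<le> B * indicator (E \<inter> G) \<omega>"
      using convex bound by eventually_elim (simp add: indicator_def)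
    show "(\<integral>\<^sup>+\<omega>. B * indicator (E \<inter> G) \<omega> \<partial>M) \<le> 1"
      using EG small by (simp add: nn_integral_cmult_indicator)
    show "c \<in> lux_set M \<phi> (\<lambda>\<omega>. indicator (- G) \<omega> *\<^sub>R (indicator E \<omega> *\<^sub>R u0 \<omega>))"
      using lux_set_indicator[OF _ u0] convex by (auto elim: eventually_mono)
  qed (use convex EG in \<open>auto elim: eventually_mono\<close>)
  ultimately show ?thesis by simp
qed

lemma patch_in_L_phi:
  assumes convex: "AE \<omega> in M. ennreal_convex (\<phi> \<omega>) \<and> \<phi> \<omega> 0 = 0"
    and u0: "u0 \<in> L_phi M \<phi>" and F: "F \<in> sets M" and G: "G \<in> sets M" "G \<subseteq> F" "emeasure M G < \<infinity>"
    and u1: "strongly_measurable (restrict_space M F) u1"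
    and bound: "AE \<omega> in M. \<omega> \<in> G \<longrightarrow> \<phi> \<omega> (u1 \<omega>) \<le> ennreal b"
  shows "(\<lambda>\<omega>. if \<omega> \<in> G then u1 \<omega> else u0 \<omega>) \<in> L_phi M \<phi>"
proof -
  obtain \<alpha> where \<alpha>: "\<alpha> \<in> lux_set M \<phi> u0" using u0 unfolding L_phi_def by blast
  \<comment> \<open>c \<ge> \<alpha> keeps u0 admissible, c \<ge> 1 lets convexity scale the bound to b / c,
    and c \<ge> b \<mu>(G) makes (b / c) \<mu>(G) \<le> 1\<close>
  define c where "c = max (max \<alpha> 1) (b * measure M G)"
  have "1 \<le> c" by (simp add: c_def)
  have "c \<in> lux_set M \<phi> (\<lambda>\<omega>. indicator UNIV \<omega> *\<^sub>R u0 \<omega>)"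
    using lux_set_mono[OF convex \<alpha>] by (simp add: c_def)
  moreover have "AE \<omega> in M. \<omega> \<in> UNIV \<inter> G \<longrightarrow> \<phi> \<omega> ((1/c) *\<^sub>R u1 \<omega>) \<le> ennreal (b / c)"
    using convex bound
  proof eventually_elim
    case (elim \<omega>)
    have "\<phi> \<omega> ((1/c) *\<^sub>R u1 \<omega>) \<le> ennreal (1/c) * \<phi> \<omega> (u1 \<omega>)"
      using elim \<open>1 \<le> c\<close> by (intro ennreal_convex_scaleR_le) auto
    also have "\<dots> \<le> ennreal (1/c) * ennreal b" if "\<omega> \<in> G"
      using elim(2) that by (intro mult_left_mono) simp_all
    finally show ?case using \<open>1 \<le> c\<close> by (auto simp: ennreal_mult'[symmetric])
  qed
  moreover have "ennreal (b / c) * emeasure M (UNIV \<inter> G) \<le> 1"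
  proof -
    have "ennreal (b / c) * emeasure M G = ennreal (b / c * measure M G)"
      using G(3) by (simp add: emeasure_eq_ennreal_measure less_top flip: ennreal_mult'')
    also have "\<dots> \<le> 1"
      using \<open>1 \<le> c\<close> by (simp add: c_def field_simps)
    finally show ?thesis by simp
  qed
  ultimately have "2 * c \<in> lux_set M \<phi> (\<lambda>\<omega>. indicator UNIV \<omega> *\<^sub>R (if \<omega> \<in> G then u1 \<omega> else u0 \<omega>))"
    using G by (intro lux_set_patch[OF convex]) auto
  moreover have "strongly_measurable M (\<lambda>\<omega>. if \<omega> \<in> G then u1 \<omega> else u0 \<omega>)"
    using u0 by (intro strongly_measurable_If[OF u1 _ F G(1,2)]) (simp add: L_phi_def)
  ultimately show ?thesis unfolding L_phi_def by auto
qed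

lemma patch_in_C_phi:
  assumes convex: "AE \<omega> in M. ennreal_convex (\<phi> \<omega>) \<and> \<phi> \<omega> 0 = 0"
    and u0: "u0 \<in> C_phi M \<phi>" and F: "F \<in> sets M" and G: "G \<in> sets M" "G \<subseteq> F" "emeasure M G < \<infinity>"
    and u1: "strongly_measurable (restrict_space M F) u1"
    and bounded: "\<And>r. 0 < r \<Longrightarrow> \<exists>B. B \<noteq> \<infinity> \<and> (AE \<omega> in M. \<omega> \<in> G \<longrightarrow> \<phi> \<omega> (r *\<^sub>R u1 \<omega>) \<le> B)"
  shows "(\<lambda>\<omega>. if \<omega> \<in> G then u1 \<omega> else u0 \<omega>) \<in> C_phi M \<phi>"
proof -
  let ?w = "\<lambda>\<omega>. if \<omega> \<in> G then u1 \<omega> else u0 \<omega>"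
  note C_phi_iff = C_phi_iff_eventually_lux_set[OF convex]
  obtain B1 where "B1 \<noteq> \<infinity>" and B1: "AE \<omega> in M. \<omega> \<in> G \<longrightarrow> \<phi> \<omega> (1 *\<^sub>R u1 \<omega>) \<le> B1"
    using bounded[of 1] by auto
  then obtain b where "B1 = ennreal b" by (cases B1 rule: ennreal_cases) auto
  with B1 u0 have "?w \<in> L_phi M \<phi>"
    by (intro patch_in_L_phi[OF convex _ F G u1]) (auto simp: C_phi_def)
  moreover have "eventually (\<lambda>n. c \<in> lux_set M \<phi> (\<lambda>\<omega>. indicator (E n) \<omega> *\<^sub>R ?w \<omega>)) sequentially"
    if E: "\<And>n. E n \<in> sets M" and lim: "AE \<omega> in M. (\<lambda>n. indicator (E n) \<omega> :: real) \<longlonglongrightarrow> 0"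
      and "0 < c" for E c
  proof -
    obtain B where "B \<noteq> \<infinity>" and B: "AE \<omega> in M. \<omega> \<in> G \<longrightarrow> \<phi> \<omega> ((2 / c) *\<^sub>R u1 \<omega>) \<le> B"
      using bounded[of "2 / c"] \<open>0 < c\<close> by auto
    have "(\<lambda>n. B * emeasure M (E n \<inter> G)) \<longlonglongrightarrow> B * 0"
      using \<open>B \<noteq> \<infinity>\<close> emeasure_Int_tendsto_zero[OF G(1,3) E lim]
      by (intro ennreal_tendsto_cmult) (simp_all add: less_top)
    then have "eventually (\<lambda>n. B * emeasure M (E n \<inter> G) < 1) sequentially"
      by (rule order_tendstoD) simp
    moreover have "eventually (\<lambda>n. c / 2 \<in> lux_set M \<phi> (\<lambda>\<omega>. indicator (E n) \<omega> *\<^sub>R u0 \<omega>)) sequentially"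
      using u0 E lim \<open>0 < c\<close> unfolding C_phi_iff by simp
    ultimately show ?thesis
    proof eventually_elim
      case (elim n)
      have EG: "E n \<inter> G \<in> sets M" using E G(1) by blast
      have bound: "AE \<omega> in M. \<omega> \<in> E n \<inter> G \<longrightarrow> \<phi> \<omega> ((1 / (c / 2)) *\<^sub>R u1 \<omega>) \<le> B"
        using B by eventually_elim simp
      have small: "B * emeasure M (E n \<inter> G) \<le> 1" using elim(1) by (rule less_imp_le)
      have "2 * (c / 2) \<in> lux_set M \<phi> (\<lambda>\<omega>. indicator (E n) \<omega> *\<^sub>R ?w \<omega>)"
        by (rule lux_set_patch[OF convex EG elim(2) bound small])
      then show ?case by simp
    qed
  qed
  ultimately show ?thesis unfolding C_phi_iff by blast
qed

lemma bounded_scaleR_if_bounded_multiples: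
  assumes convex: "AE \<omega> in M. ennreal_convex (\<phi> \<omega>) \<and> \<phi> \<omega> 0 = 0"
    and N: "\<And>k \<omega>. \<omega> \<in> G \<Longrightarrow> \<phi> \<omega> (real (Suc k) *\<^sub>R u \<omega>) \<le> of_nat (N k :: nat)" and "0 < r"
  shows "\<exists>B. B \<noteq> \<infinity> \<and> (AE \<omega> in M. \<omega> \<in> G \<longrightarrow> \<phi> \<omega> (r *\<^sub>R u \<omega>) \<le> B)"
proof -
  obtain k where "r \<le> real k" using real_arch_simple by blast
  then have "r \<le> real (Suc k)" by simp
  have "AE \<omega> in M. \<omega> \<in> G \<longrightarrow> \<phi> \<omega> (r *\<^sub>R u \<omega>) \<le> of_nat (N k)"
    using convex
  proof (eventually_elim, intro impI)
    case (elim \<omega>)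
    assume "\<omega> \<in> G"
    have "\<phi> \<omega> ((r / real (Suc k)) *\<^sub>R (real (Suc k) *\<^sub>R u \<omega>)) \<le> \<phi> \<omega> (real (Suc k) *\<^sub>R u \<omega>)"
      using elim \<open>0 < r\<close> \<open>r \<le> real (Suc k)\<close> by (intro ennreal_convex_scaleR_mono) auto
    then show "\<phi> \<omega> (r *\<^sub>R u \<omega>) \<le> of_nat (N k)"
      using N[OF \<open>\<omega> \<in> G\<close>, of k] by simp
  qed
  then show ?thesis by (intro exI[of _ "of_nat (N k)"]) simp
qed

lemma exists_patch_in_C_phi:
  fixes \<phi> :: "'a \<Rightarrow> 'b::banach \<Rightarrow> ennreal"
  assumes orl: "orlicz_integrand M \<phi>" and rv: "real_valued_integrand M \<phi>"
    and u0: "u0 \<in> C_phi M \<phi>" and F: "F \<in> sets M" "emeasure M F < \<infinity>" and "0 < \<epsilon>"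
    and u1: "strongly_measurable (restrict_space M F) u1"
  obtains G where "G \<in> sets M" "G \<subseteq> F" "emeasure M (F - G) < ennreal \<epsilon>"
    "(\<lambda>\<omega>. if \<omega> \<in> G then u1 \<omega> else u0 \<omega>) \<in> C_phi M \<phi>"
proof (cases "\<exists>v::'b. v \<noteq> 0")
  \<comment> \<open>in the zero space at 0 is the trivial filter, so \<phi> \<omega> 0 = 0 cannot be derived;
    but there every patch equals u0\<close>
  case False
  then have trivial: "x = 0" for x :: 'b by blast
  have "(\<lambda>\<omega>. if \<omega> \<in> F then u1 \<omega> else u0 \<omega>) = u0"
    by (rule ext) (metis trivial)
  then show ?thesis using that[of F] F u0 \<open>0 < \<epsilon>\<close> by simp
next
  case True
  then have convex: "AE \<omega> in M. ennreal_convex (\<phi> \<omega>) \<and> \<phi> \<omega> 0 = 0"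
    using orlicz_integrand_AE_convex_zero[OF orl] by blast
  have measurable: "(\<lambda>\<omega>. \<phi> \<omega> (real (Suc k) *\<^sub>R u1 \<omega>)) \<in> borel_measurable (restrict_space M F)" for k
    using u1 by (intro orlicz_integrand_measurable_comp[OF orl F] strongly_measurable_scaleR)
  have finite: "AE \<omega> in M. \<omega> \<in> F \<longrightarrow> (\<forall>k. \<phi> \<omega> (real (Suc k) *\<^sub>R u1 \<omega>) < \<infinity>)"
    using rv unfolding real_valued_integrand_def by (rule eventually_mono) blast
  obtain G N where G: "G \<in> sets M" "G \<subseteq> F" "emeasure M (F - G) < ennreal \<epsilon>"
    and N: "\<And>k \<omega>. \<omega> \<in> G \<Longrightarrow> \<phi> \<omega> (real (Suc k) *\<^sub>R u1 \<omega>) \<le> of_nat (N k :: nat)"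
    using bounded_on_large_subset[OF F \<open>0 < \<epsilon>\<close> measurable finite] by blast
  have "\<exists>B. B \<noteq> \<infinity> \<and> (AE \<omega> in M. \<omega> \<in> G \<longrightarrow> \<phi> \<omega> (r *\<^sub>R u1 \<omega>) \<le> B)" if "0 < r" for r
    using bounded_scaleR_if_bounded_multiples[OF convex N that] .
  moreover have "emeasure M G < \<infinity>"
    using G F emeasure_mono[of G F M] by (auto simp: less_top[symmetric] top_unique)
  ultimately have "(\<lambda>\<omega>. if \<omega> \<in> G then u1 \<omega> else u0 \<omega>) \<in> C_phi M \<phi>"
    using G(1,2) by (intro patch_in_C_phi[OF convex u0 F(1) _ _ _ u1])
  then show ?thesis using that G by blast
qed

lemma sigma_finite_set_Un:
  assumes "sigma_finite_set M S" "sigma_finite_set M T"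
  shows "sigma_finite_set M (S \<union> T)"
proof -
  obtain A B :: "nat \<Rightarrow> _" where
    A: "\<And>n. A n \<in> sets M" "\<And>n. emeasure M (A n) < \<infinity>" "S = (\<Union>n. A n)" and
    B: "\<And>n. B n \<in> sets M" "\<And>n. emeasure M (B n) < \<infinity>" "T = (\<Union>n. B n)"
    using assms unfolding sigma_finite_set_def by metis
  have "emeasure M (A n \<union> B n) < \<infinity>" for n
  proof -
    have "emeasure M (A n \<union> B n) \<le> emeasure M (A n) + emeasure M (B n)"
      by (rule emeasure_subadditive[OF A(1) B(1)])
    also have "\<dots> < \<infinity>" using A(2) B(2) by (simp add: less_top)
    finally show ?thesis .
  qed
  then show ?thesis
    unfolding sigma_finite_set_def using A B by (intro exI[of _ "\<lambda>n. A n \<union> B n"]) auto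
qed

lemma sigma_finite_set_finite_measure:
  "F \<in> sets M \<Longrightarrow> emeasure M F < \<infinity> \<Longrightarrow> sigma_finite_set M F"
  unfolding sigma_finite_set_def by (intro exI[of _ "\<lambda>_. F"]) auto

lemma patch_in_C_sigma_phi:
  assumes u0: "u0 \<in> C_sigma_phi M \<phi>" and w: "(\<lambda>\<omega>. if \<omega> \<in> G then u1 \<omega> else u0 \<omega>) \<in> C_phi M \<phi>"
    and "G \<subseteq> F" "F \<in> sets M" "emeasure M F < \<infinity>"
  shows "(\<lambda>\<omega>. if \<omega> \<in> G then u1 \<omega> else u0 \<omega>) \<in> C_sigma_phi M \<phi>"
proof -
  obtain S where "sigma_finite_set M S" and S: "AE \<omega> in M. \<omega> \<notin> S \<longrightarrow> u0 \<omega> = 0"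
    using u0 by (auto simp: C_sigma_phi_def)
  then have "sigma_finite_set M (S \<union> F)"
    using sigma_finite_set_Un sigma_finite_set_finite_measure[OF assms(4,5)] by blast
  moreover have "AE \<omega> in M. \<omega> \<notin> S \<union> F \<longrightarrow> (if \<omega> \<in> G then u1 \<omega> else u0 \<omega>) = 0"
    using S by eventually_elim (use \<open>G \<subseteq> F\<close> in auto)
  ultimately show ?thesis using w unfolding C_sigma_phi_def by blast
qed

lemma almost_decomposable_C_phi:
  fixes \<phi> :: "'a \<Rightarrow> 'b::banach \<Rightarrow> ennreal"
  assumes "orlicz_integrand M \<phi>" "real_valued_integrand M \<phi>"
  shows "almost_decomposable M (C_phi M \<phi>)"
  unfolding almost_decomposable_def
proof (intro ballI impI allI; elim conjE)
  fix u0 F and \<epsilon> :: real and u1 :: "'a \<Rightarrow> 'b"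
  assume "u0 \<in> C_phi M \<phi>" "F \<in> sets M" "emeasure M F < \<infinity>" "0 < \<epsilon>"
    and "strongly_measurable (restrict_space M F) u1"
  from exists_patch_in_C_phi[OF assms this] obtain G where
    "G \<in> sets M" "G \<subseteq> F" "emeasure M (F - G) < ennreal \<epsilon>"
    "(\<lambda>\<omega>. if \<omega> \<in> G then u1 \<omega> else u0 \<omega>) \<in> C_phi M \<phi>" .
  then show "\<exists>F\<epsilon>. F\<epsilon> \<in> sets M \<and> F\<epsilon> \<subseteq> F \<and> emeasure M (F - F\<epsilon>) < ennreal \<epsilon> \<and>
      (\<lambda>\<omega>. if \<omega> \<in> F\<epsilon> then u1 \<omega> else u0 \<omega>) \<in> C_phi M \<phi>"
    by (intro exI[of _ G] conjI)
qed

lemma almost_decomposable_C_sigma_phi: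
  fixes \<phi> :: "'a \<Rightarrow> 'b::banach \<Rightarrow> ennreal"
  assumes "orlicz_integrand M \<phi>" "real_valued_integrand M \<phi>"
  shows "almost_decomposable M (C_sigma_phi M \<phi>)"
  unfolding almost_decomposable_def
proof (intro ballI impI allI; elim conjE)
  fix u0 F and \<epsilon> :: real and u1 :: "'a \<Rightarrow> 'b"
  assume u0: "u0 \<in> C_sigma_phi M \<phi>" and F: "F \<in> sets M" "emeasure M F < \<infinity>" and "0 < \<epsilon>"
    and u1: "strongly_measurable (restrict_space M F) u1"
  from u0 have "u0 \<in> C_phi M \<phi>" by (simp add: C_sigma_phi_def)
  from exists_patch_in_C_phi[OF assms this F \<open>0 < \<epsilon>\<close> u1] obtain G where
    G: "G \<in> sets M" "G \<subseteq> F" "emeasure M (F - G) < ennreal \<epsilon>"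
    and w: "(\<lambda>\<omega>. if \<omega> \<in> G then u1 \<omega> else u0 \<omega>) \<in> C_phi M \<phi>" .
  from patch_in_C_sigma_phi[OF u0 w G(2) F] G
  show "\<exists>F\<epsilon>. F\<epsilon> \<in> sets M \<and> F\<epsilon> \<subseteq> F \<and> emeasure M (F - F\<epsilon>) < ennreal \<epsilon> \<and>
      (\<lambda>\<omega>. if \<omega> \<in> F\<epsilon> then u1 \<omega> else u0 \<omega>) \<in> C_sigma_phi M \<phi>"
    by (intro exI[of _ G] conjI)
qed

theorem lemma3p4p7:
  fixes M :: "'a measure" and \<phi> :: "'a \<Rightarrow> 'b::banach \<Rightarrow> ennreal"
  assumes "\<exists>A\<in>sets M. emeasure M A > 0"
    and "orlicz_integrand M \<phi>"
    and "real_valued_integrand M \<phi>"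
  shows "almost_decomposable M (C_phi M \<phi>) \<and> almost_decomposable M (C_sigma_phi M \<phi>)"
  using almost_decomposable_C_phi[OF assms(2,3)] almost_decomposable_C_sigma_phi[OF assms(2,3)] ..

end
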